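(* There is an absolute constant $c$ such that the following holds. Let $2\pi>\theta_1>\theta_2>\dots>\theta_m>0$ and $s_\ell=\sum_{j=1}^\ell\theta_j$. Then $$\max_{1\le\ell\le m}\Big|\sum_{j=1}^\ell e^{is_j}\Big|\le c\big(\theta_m^{-1}+(2\pi-\theta_1)^{-1}\big).$$ *)

theory Defs
  imports "HOL-Analysis.Analysis"
begin

end

theory Submission imports Defs begin

(*
  Write s_j = theta_1 + ... + theta_j and t_j = cot (theta_j / 2).  Since
  1 / (1 - cis (-theta_j)) = 1/2 - i t_j / 2, one has the exact identity
      cis s_j = (cis s_j - cis s_(j-1)) * a_j,   a_j = 1/2 - i t_j / 2,
  so the partial sum is a sum of differences weighted by a_j, and summation
  by parts moves the differences onto the a_j.  As the theta_j decrease, the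
  t_j increase, so the differences a_(j+1) - a_j telescope in norm and the
  whole sum is bounded by 1 + max 0 t_l + max 0 (-t_1).  Elementary cotangent
  bounds turn this into 1 + 2/theta_l + 2/(2 pi - theta_1) <= 1 + 2/theta_m
  + 2/(2 pi - theta_1), and since 1 < 2 pi/theta_m the theorem follows with c = 10.
*)

lemma cot_le_inverse:
  fixes y :: real
  assumes "0 < y" "y < pi"
  shows "cot y \<le> 1 / y"
proof (cases "y < pi / 2")
  case True
  have "0 < tan y" using tan_gt_zero[of y] True assms by auto
  moreover have "y \<le> tan y" using abs_tan_ge[of y] True assms \<open>0 < tan y\<close> by auto
  ultimately have "inverse (tan y) \<le> inverse y" using assms by (intro le_imp_inverse_le) auto
  thus ?thesis by (simp add: cot_altdef inverse_eq_divide)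
next
  case False
  have "cos (pi - y) \<ge> 0" using False assms by (intro cos_ge_zero) auto
  hence "cos y \<le> 0" by simp
  moreover have "sin y > 0" using assms sin_gt_zero by auto
  ultimately have "cot y \<le> 0" by (simp add: cot_def divide_nonpos_pos)
  also have "0 < 1 / y" using assms by simp
  finally show ?thesis by simp
qed

lemma cot_antimono:
  fixes a b :: real
  assumes "0 < a" "a \<le> b" "b < pi"
  shows "cot b \<le> cot a"
proof -
  have sin_pos: "sin a > 0" "sin b > 0" using assms sin_gt_zero by auto
  have "sin (b - a) \<ge> 0" using assms by (intro sin_ge_zero) auto
  hence "cos b * sin a \<le> cos a * sin b" by (simp add: sin_diff mult.commute)
  thus ?thesis using sin_pos by (simp add: cot_def divide_simps)
qed

lemma cot_half_upper:
  fixes \<theta> :: real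
  assumes "0 < \<theta>" "\<theta> < 2 * pi"
  shows "cot (\<theta> / 2) \<le> 2 / \<theta>"
  using cot_le_inverse[of "\<theta> / 2"] assms by simp

lemma cot_half_lower:
  fixes \<theta> :: real
  assumes "0 < \<theta>" "\<theta> < 2 * pi"
  shows "- cot (\<theta> / 2) \<le> 2 / (2 * pi - \<theta>)"
proof -
  have "- cot (\<theta> / 2) = cot (pi - \<theta> / 2)" by (simp add: cot_def)
  also have "\<dots> \<le> 1 / (pi - \<theta> / 2)" using assms by (intro cot_le_inverse) auto
  also have "\<dots> = 2 / (2 * pi - \<theta>)" by (simp add: field_simps)
  finally show ?thesis .
qed

text \<open>A unimodular number as a difference times a weight:
  \<open>cis s = (cis s - cis (s - 2h)) * (1/2 - i cot h / 2)\<close>, i.e. the weight is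
  \<open>1 / (1 - cis (-2h))\<close> written in real and imaginary parts.\<close>

lemma cis_eq_diff_mult_weight:
  fixes s h :: real
  assumes "sin h \<noteq> 0"
  shows "cis s = (cis s - cis (s - 2 * h)) * (1/2 - \<i> * complex_of_real (cot h / 2))"
proof -
  have pyth: "(sin h)\<^sup>2 + (cos h)\<^sup>2 = 1" by simp
  have shifted: "cis (s - 2 * h) =
      Complex (cos s * (1 - 2 * (sin h)\<^sup>2) + sin s * (2 * sin h * cos h))
              (sin s * (1 - 2 * (sin h)\<^sup>2) - cos s * (2 * sin h * cos h))"
    by (simp add: cis.ctr cos_diff sin_diff cos_double_sin sin_double)
  show ?thesis
    using assms unfolding shifted
    by (simp add: complex_eq_iff cot_def field_simps) (use pyth in algebra)
qed

lemma summation_by_parts: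
  fixes w a :: "nat \<Rightarrow> 'a::comm_ring"
  assumes "1 \<le> l"
  shows "(\<Sum>j=1..l. (w j - w (j - 1)) * a j)
           = w l * a l - w 0 * a 1 - (\<Sum>j=1..l-1. w j * (a (Suc j) - a j))"
  using assms
proof (induction l rule: dec_induct)
  case base
  show ?case by (simp add: algebra_simps)
next
  case (step n)
  have split_last: "(\<Sum>j=1..n. w j * (a (Suc j) - a j))
      = (\<Sum>j=1..n-1. w j * (a (Suc j) - a j)) + w n * (a (Suc n) - a n)"
    using step.hyps by (cases n) (auto simp: sum.cl_ivl_Suc)
  define S where "S = (\<Sum>j=1..n-1. w j * (a (Suc j) - a j))"
  have "(\<Sum>j=1..Suc n. (w j - w (j - 1)) * a j)
      = (\<Sum>j=1..n. (w j - w (j - 1)) * a j) + (w (Suc n) - w n) * a (Suc n)"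
    by simp
  also have "\<dots> = w (Suc n) * a (Suc n) - w 0 * a 1 - (S + w n * (a (Suc n) - a n))"
    unfolding step.IH S_def[symmetric] by (simp add: algebra_simps)
  finally show ?case
    using split_last by (simp add: S_def)
qed

lemma weighted_differences_bound:
  fixes w :: "nat \<Rightarrow> complex" and t :: "nat \<Rightarrow> real"
  assumes "1 \<le> l"
    and norm_w: "\<And>j. norm (w j) \<le> 1"
    and t_mono: "\<And>j. 1 \<le> j \<Longrightarrow> j < l \<Longrightarrow> t j \<le> t (Suc j)"
  defines "a \<equiv> \<lambda>j. 1/2 - \<i> * complex_of_real (t j / 2)"
  shows "norm (\<Sum>j=1..l. (w j - w (j - 1)) * a j) \<le> 1 + max 0 (t l) + max 0 (- t 1)"
proof -
  have norm_a: "norm (a j) \<le> 1/2 + \<bar>t j\<bar> / 2" for j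
    using norm_triangle_ineq4[of "1/2" "\<i> * complex_of_real (t j / 2)"]
    by (simp add: a_def norm_mult)
  have norm_step: "norm (a (Suc j) - a j) = (t (Suc j) - t j) / 2"
    if "1 \<le> j" "j < l" for j
  proof -
    have "a (Suc j) - a j = - \<i> * complex_of_real ((t (Suc j) - t j) / 2)"
      by (simp add: a_def algebra_simps diff_divide_distrib)
    thus ?thesis using t_mono[OF that] by (simp add: norm_mult flip: of_real_diff)
  qed
  have telescope: "(\<Sum>j=1..l-1. norm (a (Suc j) - a j)) = (t l - t 1) / 2"
  proof -
    have "(\<Sum>j=1..l-1. norm (a (Suc j) - a j)) = (\<Sum>j=1..l-1. (t (Suc j) - t j) / 2)"
      by (intro sum.cong) (auto simp: norm_step)
    also have "\<dots> = (t l - t 1) / 2"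
      using assms(1) by (simp add: sum_divide_distrib[symmetric] sum_Suc_diff)
    finally show ?thesis .
  qed
  have "norm (\<Sum>j=1..l. (w j - w (j - 1)) * a j)
      \<le> norm (w l * a l) + norm (w 0 * a 1) + norm (\<Sum>j=1..l-1. w j * (a (Suc j) - a j))"
    unfolding summation_by_parts[OF assms(1)]
    by (meson norm_triangle_ineq4 add_right_mono order_trans)
  also have "\<dots> \<le> norm (a l) + norm (a 1) + (\<Sum>j=1..l-1. norm (a (Suc j) - a j))"
  proof -
    have absorb: "norm (w j * b) \<le> norm b" for j and b :: complex
      using norm_w[of j] by (simp add: norm_mult mult_left_le_one_le)
    have "norm (\<Sum>j=1..l-1. w j * (a (Suc j) - a j))
        \<le> (\<Sum>j=1..l-1. norm (w j * (a (Suc j) - a j)))" by (rule norm_sum)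
    also have "\<dots> \<le> (\<Sum>j=1..l-1. norm (a (Suc j) - a j))" by (intro sum_mono absorb)
    finally show ?thesis using absorb[of l "a l"] absorb[of 0 "a 1"] by linarith
  qed
  also have "\<dots> \<le> 1 + max 0 (t l) + max 0 (- t 1)"
    using norm_a[of l] norm_a[of 1] telescope by argo
  finally show ?thesis .
qed

lemma cis_partial_sum_bound:
  fixes \<theta> :: "nat \<Rightarrow> real"
  assumes "1 \<le> l"
    and angle_range: "\<And>j. 1 \<le> j \<Longrightarrow> j \<le> l \<Longrightarrow> 0 < \<theta> j \<and> \<theta> j < 2 * pi"
    and angle_antimono: "\<And>j. 1 \<le> j \<Longrightarrow> j < l \<Longrightarrow> \<theta> (Suc j) \<le> \<theta> j"
  shows "cmod (\<Sum>j=1..l. cis (\<Sum>i=1..j. \<theta> i)) \<le> 1 + 2 / \<theta> l + 2 / (2 * pi - \<theta> 1)"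
proof -
  define s where "s j = (\<Sum>i=1..j. \<theta> i)" for j
  define t where "t j = cot (\<theta> j / 2)" for j
  have as_differences: "cis (s j) = (cis (s j) - cis (s (j - 1))) * (1/2 - \<i> * complex_of_real (t j / 2))"
    if "1 \<le> j" "j \<le> l" for j
  proof -
    have shift: "s (j - 1) = s j - 2 * (\<theta> j / 2)"
      unfolding s_def using that sum.cl_ivl_Suc[of \<theta> 1 "j - 1"] by (cases j) auto
    have "sin (\<theta> j / 2) \<noteq> 0"
      using angle_range[OF that] sin_gt_zero[of "\<theta> j / 2"] by auto
    then show ?thesis unfolding shift t_def by (rule cis_eq_diff_mult_weight)
  qed
  have t_mono: "t j \<le> t (Suc j)" if "1 \<le> j" "j < l" for j
    unfolding t_def using angle_range[of j] angle_range[of "Suc j"] angle_antimono that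
    by (intro cot_antimono) auto
  have weighted: "(\<Sum>j=1..l. cis (s j))
      = (\<Sum>j=1..l. (cis (s j) - cis (s (j - 1))) * (1/2 - \<i> * complex_of_real (t j / 2)))"
    by (intro sum.cong refl as_differences) auto
  have "cmod (\<Sum>j=1..l. cis (s j)) \<le> 1 + max 0 (t l) + max 0 (- t 1)"
    unfolding weighted
    using weighted_differences_bound[of l "\<lambda>j. cis (s j)" t, OF assms(1) _ t_mono] by simp
  also have "\<dots> \<le> 1 + 2 / \<theta> l + 2 / (2 * pi - \<theta> 1)"
  proof -
    have "max 0 (t l) \<le> 2 / \<theta> l"
      using cot_half_upper[of "\<theta> l"] angle_range[of l] assms(1) unfolding t_def by simp
    moreover have "max 0 (- t 1) \<le> 2 / (2 * pi - \<theta> 1)"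
      using cot_half_lower[of "\<theta> 1"] angle_range[of 1] assms(1) unfolding t_def by simp
    ultimately show ?thesis by argo
  qed
  finally show ?thesis unfolding s_def .
qed

text \<open>The additive constant 1 is absorbed into the reciprocal terms, since
  \<open>1 < 2 pi / a\<close> for every angle \<open>a \<in> (0, 2 pi)\<close>; this fixes the constant \<open>c = 10\<close>.\<close>

lemma reciprocal_bounds_absorb_one:
  fixes a b :: real
  assumes "0 < a" "a < 2 * pi" "0 < b"
  shows "1 + 2 / a + 2 / b \<le> 10 * (1 / a + 1 / b)"
proof -
  have "1 \<le> 8 / a" using assms pi_less_4 by (simp add: field_simps)
  moreover have "8 / a = 8 * (1 / a)" "2 / a = 2 * (1 / a)" "2 / b = 2 * (1 / b)" by simp_all
  moreover have "0 < 1 / b" using assms by simp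
  ultimately show ?thesis by argo
qed

theorem mainTheorem15:
  shows "\<exists>c::real. \<forall>(m::nat) (\<theta>::nat \<Rightarrow> real).
    m \<ge> 1 \<longrightarrow> \<theta> 1 < 2 * pi \<longrightarrow> \<theta> m > 0 \<longrightarrow>
    (\<forall>j k. 1 \<le> j \<longrightarrow> j < k \<longrightarrow> k \<le> m \<longrightarrow> \<theta> k < \<theta> j) \<longrightarrow>
    (MAX l\<in>{1..m}. cmod (\<Sum>j=1..l. cis (\<Sum>i=1..j. \<theta> i)))
      \<le> c * (1 / \<theta> m + 1 / (2 * pi - \<theta> 1))"
proof (intro exI[of _ 10] allI impI)
  fix m :: nat and \<theta> :: "nat \<Rightarrow> real"
  assume m: "m \<ge> 1" and \<theta>1: "\<theta> 1 < 2 * pi" and \<theta>m: "\<theta> m > 0"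
    and decreasing: "\<forall>j k. 1 \<le> j \<longrightarrow> j < k \<longrightarrow> k \<le> m \<longrightarrow> \<theta> k < \<theta> j"
  have between: "\<theta> m \<le> \<theta> j \<and> \<theta> j \<le> \<theta> 1" if "1 \<le> j" "j \<le> m" for j
    using decreasing[rule_format, of j m] decreasing[rule_format, of 1 j] that
    by (cases "j = m"; cases "j = 1") auto
  have "cmod (\<Sum>j=1..l. cis (\<Sum>i=1..j. \<theta> i)) \<le> 10 * (1 / \<theta> m + 1 / (2 * pi - \<theta> 1))"
    if l: "1 \<le> l" "l \<le> m" for l
  proof -
    have "cmod (\<Sum>j=1..l. cis (\<Sum>i=1..j. \<theta> i)) \<le> 1 + 2 / \<theta> l + 2 / (2 * pi - \<theta> 1)"
    proof (rule cis_partial_sum_bound)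
      show "0 < \<theta> j \<and> \<theta> j < 2 * pi" if "1 \<le> j" "j \<le> l" for j
        using between[of j] that l \<theta>1 \<theta>m by fastforce
      show "\<theta> (Suc j) \<le> \<theta> j" if "1 \<le> j" "j < l" for j
        using decreasing[rule_format, of j "Suc j"] that l by simp
    qed (use l in simp)
    also have "\<dots> \<le> 1 + 2 / \<theta> m + 2 / (2 * pi - \<theta> 1)"
      using between[OF l] \<theta>m by (simp add: frac_le)
    also have "\<dots> \<le> 10 * (1 / \<theta> m + 1 / (2 * pi - \<theta> 1))"
      using between[OF m order.refl] \<theta>1 \<theta>m by (intro reciprocal_bounds_absorb_one) auto
    finally show ?thesis .
  qed
  thus "(MAX l\<in>{1..m}. cmod (\<Sum>j=1..l. cis (\<Sum>i=1..j. \<theta> i)))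
      \<le> 10 * (1 / \<theta> m + 1 / (2 * pi - \<theta> 1))"
    using m by (subst Max_le_iff) auto
qed

end
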